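(* Let $X$ be a connected, non-bipartite strongly regular graph with parameters $(n,k,a,c)$, $k\ge3$, $k>c\ge1$, whose adjacency matrix has the integer eigenvalue $e=\lambda_1$, the larger root of $\lambda^2-(a-c)\lambda-(k-c)=0$. Suppose $c=e(e+1)$ and $e>a$. Then for every vertex $v$ of $X$, the closed neighbourhood $N=\{v\}\cup X_1(v)$ (the subgraph induced by $v$ together with its neighbours) is a star complement for $e$ in $X$.
   Context: A strongly regular graph with parameters $(n,k,a,c)$ has $n$ vertices, degree $k$, every two adjacent vertices have $a$ common neighbours and every two distinct non-adjacent vertices have $c$ common neighbours. If $e$ is an eigenvalue of $X$ with multiplicity $m$, a star complement for $e$ in $X$ is an induced subgraph on $n-m$ vertices that does not have $e$ as an eigenvalue. $X_1(v)$ denotes the set of neighbours of $v$. *)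

theory Defs
  imports "Jordan_Normal_Form.Char_Poly"
begin

definition simple_graph :: "'a set \<Rightarrow> ('a \<Rightarrow> 'a \<Rightarrow> bool) \<Rightarrow> bool" where
  "simple_graph V E \<longleftrightarrow> finite V \<and> (\<forall>u v. E u v \<longrightarrow> u \<in> V \<and> v \<in> V)
     \<and> (\<forall>u v. E u v \<longrightarrow> E v u) \<and> (\<forall>u. \<not> E u u)"

definition nbrs :: "('a \<Rightarrow> 'a \<Rightarrow> bool) \<Rightarrow> 'a \<Rightarrow> 'a set" where
  "nbrs E v = {u. E v u}"

definition graph_connected :: "'a set \<Rightarrow> ('a \<Rightarrow> 'a \<Rightarrow> bool) \<Rightarrow> bool" where
  "graph_connected V E \<longleftrightarrow> (\<forall>u\<in>V. \<forall>v\<in>V. E\<^sup>*\<^sup>* u v)"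

definition bipartite :: "'a set \<Rightarrow> ('a \<Rightarrow> 'a \<Rightarrow> bool) \<Rightarrow> bool" where
  "bipartite V E \<longleftrightarrow> (\<exists>A. A \<subseteq> V \<and> (\<forall>u v. E u v \<longrightarrow> (u \<in> A \<longleftrightarrow> v \<notin> A)))"

definition strongly_regular ::
  "'a set \<Rightarrow> ('a \<Rightarrow> 'a \<Rightarrow> bool) \<Rightarrow> nat \<Rightarrow> nat \<Rightarrow> nat \<Rightarrow> nat \<Rightarrow> bool" where
  "strongly_regular V E n k a c \<longleftrightarrow> simple_graph V E \<and> card V = n
     \<and> (\<forall>v\<in>V. card (nbrs E v) = k)
     \<and> (\<forall>u\<in>V. \<forall>v\<in>V. E u v \<longrightarrow> card (nbrs E u \<inter> nbrs E v) = a)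
     \<and> (\<forall>u\<in>V. \<forall>v\<in>V. u \<noteq> v \<and> \<not> E u v \<longrightarrow> card (nbrs E u \<inter> nbrs E v) = c)"

text \<open>Adjacency matrix of the subgraph induced on S, w.r.t. some enumeration of S
  (eigenvalues and characteristic polynomial do not depend on the enumeration).\<close>
definition adj_mat :: "('a \<Rightarrow> 'a \<Rightarrow> bool) \<Rightarrow> 'a set \<Rightarrow> real mat" where
  "adj_mat E S = (let xs = (SOME xs. distinct xs \<and> set xs = S) in
     mat (length xs) (length xs) (\<lambda>(i,j). if E (xs ! i) (xs ! j) then 1 else 0))"

definition eig_mult :: "real mat \<Rightarrow> real \<Rightarrow> nat" where
  "eig_mult A e = order e (char_poly A)"

definition star_complement :: "'a set \<Rightarrow> ('a \<Rightarrow> 'a \<Rightarrow> bool) \<Rightarrow> real \<Rightarrow> 'a set \<Rightarrow> bool" where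
  "star_complement V E e S \<longleftrightarrow> S \<subseteq> V
     \<and> card S = card V - eig_mult (adj_mat E V) e
     \<and> \<not> eigenvalue (adj_mat E S) e"

end

(*
  Write A for the adjacency matrix and N for the closed neighbourhood of v.

  N has no eigenfunction for e: summing the eigen-equations over the neighbours of v, which
  induce an a-regular graph, gives (e^2 - a e - k) g(v) = 0, and e^2 - a e - k = -c (e + 1) is
  nonzero, so g(v) = 0; then g restricted to X_1(v) is an eigenfunction of an a-regular graph
  for the eigenvalue e > a, hence zero.

  The multiplicity of e is n - k - 1 = n - |N|: by A^2 = (a - c) A + (k - c) I + c J every
  eigenvalue is k, e or s = a - c - e, and triangularising A over the complex numbers, the
  multiplicities of k, e and s satisfy three linear equations (their total and the traces of
  A and A^2), whose solution under c = e (e + 1) gives n - k - 1.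
*)

theory Submission
  imports Defs "Jordan_Normal_Form.Jordan_Normal_Form_Existence"
begin

lemma eigenvalue_entrywiseE:
  fixes A :: "'a::field mat"
  assumes A: "A \<in> carrier_mat n n" and "eigenvalue A d"
  obtains v where "v \<in> carrier_vec n" "\<exists>i<n. v $ i \<noteq> 0"
    "\<And>i. i < n \<Longrightarrow> (\<Sum>j = 0..<n. A $$ (i,j) * v $ j) = d * v $ i"
proof -
  obtain v where v: "v \<in> carrier_vec n" "v \<noteq> 0\<^sub>v n" "A *\<^sub>v v = d \<cdot>\<^sub>v v"
    using assms unfolding eigenvalue_def eigenvector_def by auto
  have "\<exists>i<n. v $ i \<noteq> 0"
  proof (rule ccontr)
    assume "\<not> ?thesis"
    then have "v = 0\<^sub>v n" using v(1) by (intro eq_vecI) auto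
    with v(2) show False by simp
  qed
  moreover have "(\<Sum>j = 0..<n. A $$ (i,j) * v $ j) = d * v $ i" if i: "i < n" for i
  proof -
    have "(\<Sum>j = 0..<n. A $$ (i,j) * v $ j) = (A *\<^sub>v v) $ i"
      using A v(1) i by (simp add: mult_mat_vec_def scalar_prod_def row_def)
    also have "\<dots> = d * v $ i" using v(1,3) i by (metis index_smult_vec(1) carrier_vecD)
    finally show ?thesis .
  qed
  ultimately show ?thesis using v(1) that by blast
qed

lemma adj_mat_enumeration:
  assumes "finite S"
  obtains xs where "distinct xs" "set xs = S" "length xs = card S"
    "adj_mat E S = mat (card S) (card S) (\<lambda>(i,j). if E (xs!i) (xs!j) then 1 else 0)"
proof -
  define xs where "xs = (SOME xs. distinct xs \<and> set xs = S)"
  have "\<exists>xs. distinct xs \<and> set xs = S" using finite_distinct_list[OF assms] by blast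
  from someI_ex[OF this] have xs: "distinct xs \<and> set xs = S" unfolding xs_def .
  then have "length xs = card S" using distinct_card by fastforce
  with xs show ?thesis
    using that unfolding adj_mat_def Let_def xs_def[symmetric] by auto
qed

lemma sum_nth_distinct:
  assumes "distinct xs"
  shows "(\<Sum>j = 0..<length xs. h (xs!j)) = (\<Sum>u\<in>set xs. h u)"
  using sum.reindex_bij_betw[OF bij_betw_nth[OF assms refl refl], of h]
  by (simp add: atLeast0LessThan)

lemma adj_mat_eigenvalueE:
  fixes e :: real
  assumes "finite S" and "eigenvalue (adj_mat E S) e"
  obtains g where "\<exists>u\<in>S. g u \<noteq> 0"
    and "\<And>u. u \<in> S \<Longrightarrow> e * g u = (\<Sum>w\<in>S. if E u w then g w else 0)"
proof -
  obtain ys where ys: "distinct ys" "set ys = S" "length ys = card S"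
    and A: "adj_mat E S = mat (card S) (card S) (\<lambda>(i,j). if E (ys!i) (ys!j) then 1 else 0)"
    using adj_mat_enumeration[OF assms(1)] by blast
  define m where "m = card S"
  have "adj_mat E S \<in> carrier_mat m m" unfolding A m_def by simp
  from eigenvalue_entrywiseE[OF this assms(2)] obtain x where x_nz: "\<exists>i<m. x $ i \<noteq> 0"
    and eig: "\<And>i. i < m \<Longrightarrow> (\<Sum>j = 0..<m. adj_mat E S $$ (i,j) * x $ j) = e * x $ i"
    by blast
  define g where "g u = x $ (inv_into {..<m} ((!) ys) u)" for u
  have inj: "inj_on ((!) ys) {..<m}" using inj_on_nth[OF ys(1)] ys(3) m_def by auto
  have g_nth: "g (ys!j) = x $ j" if "j < m" for j
    unfolding g_def using inv_into_f_f[OF inj] that by simp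
  have "\<exists>u\<in>S. g u \<noteq> 0" using x_nz g_nth ys m_def by (metis nth_mem)
  moreover have "e * g u = (\<Sum>w\<in>S. if E u w then g w else 0)" if u: "u \<in> S" for u
  proof -
    obtain i where i: "i < m" "u = ys ! i" using u ys unfolding m_def by (metis in_set_conv_nth)
    have "e * g u = (\<Sum>j = 0..<m. adj_mat E S $$ (i,j) * x $ j)"
      using eig[OF i(1)] g_nth[OF i(1)] i(2) by simp
    also have "\<dots> = (\<Sum>j = 0..<length ys. (\<lambda>w. if E u w then g w else 0) (ys ! j))"
      using g_nth i ys(3) m_def by (intro sum.cong) (auto simp: A)
    also have "\<dots> = (\<Sum>w\<in>S. if E u w then g w else 0)" using sum_nth_distinct[OF ys(1)] ys(2) by simp
    finally show ?thesis .
  qed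
  ultimately show ?thesis by (rule that)
qed

lemma eigenfunction_eq_0_if_gt_max_degree:
  fixes g :: "'a \<Rightarrow> real"
  assumes fin: "finite N" and deg: "\<And>u. u \<in> N \<Longrightarrow> card {w\<in>N. E u w} \<le> a"
    and ea: "real a < \<bar>e\<bar>"
    and eq: "\<And>u. u \<in> N \<Longrightarrow> e * g u = (\<Sum>w\<in>N. if E u w then g w else 0)"
    and u: "u \<in> N"
  shows "g u = 0"
proof -
  define M where "M = Max ((\<lambda>u. \<bar>g u\<bar>) ` N)"
  have M_ge: "\<bar>g w\<bar> \<le> M" if "w \<in> N" for w unfolding M_def using fin that by auto
  have "M \<in> (\<lambda>u. \<bar>g u\<bar>) ` N" unfolding M_def using fin u by (intro Max_in) auto
  then obtain u0 where u0: "u0 \<in> N" "\<bar>g u0\<bar> = M" by blast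
  have "\<bar>e\<bar> * M = \<bar>e * g u0\<bar>" using u0(2) by (simp add: abs_mult)
  also have "\<dots> = \<bar>\<Sum>w\<in>N. if E u0 w then g w else 0\<bar>" using eq[OF u0(1)] by simp
  also have "\<dots> \<le> (\<Sum>w\<in>N. \<bar>if E u0 w then g w else 0\<bar>)" by (rule sum_abs)
  also have "\<dots> \<le> (\<Sum>w\<in>N. if E u0 w then M else 0)" using M_ge by (intro sum_mono) auto
  also have "\<dots> = real (card {w\<in>N. E u0 w}) * M" using fin by (simp add: sum.inter_filter[symmetric])
  also have "\<dots> \<le> real a * M" using deg[OF u0(1)] u0(2) by (intro mult_right_mono) auto
  finally have "(\<bar>e\<bar> - real a) * M \<le> 0" by (simp add: algebra_simps)
  then have "M \<le> 0" using ea by (simp add: mult_le_0_iff)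
  then show ?thesis using M_ge[OF u] by simp
qed

lemma closed_nbhd_not_eigenvalue:
  fixes e :: real
  assumes G: "simple_graph V E" and v: "v \<in> V"
    and local_reg: "\<And>w. w \<in> nbrs E v \<Longrightarrow> card (nbrs E v \<inter> nbrs E w) = a"
    and ea: "real a < \<bar>e\<bar>" and quad: "e * e - real a * e - real (card (nbrs E v)) \<noteq> 0"
  shows "\<not> eigenvalue (adj_mat E (insert v (nbrs E v))) e"
proof
  define N where "N = nbrs E v"
  have sym: "\<And>u w. E u w \<Longrightarrow> E w u" and irrefl: "\<And>u. \<not> E u u"
    using G unfolding simple_graph_def by auto
  have "N \<subseteq> V" using G unfolding simple_graph_def N_def nbrs_def by blast
  then have fin: "finite N" using G unfolding simple_graph_def by (blast intro: finite_subset)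
  have vN: "v \<notin> N" unfolding N_def nbrs_def using irrefl by blast
  have N_iff: "w \<in> N \<longleftrightarrow> E v w" for w unfolding N_def nbrs_def by simp
  have deg: "card {w\<in>N. E u w} = a" if u: "u \<in> N" for u
  proof -
    have "{w\<in>N. E u w} = nbrs E v \<inter> nbrs E u" unfolding N_def nbrs_def by blast
    then show ?thesis using local_reg u N_def by simp
  qed
  assume "eigenvalue (adj_mat E (insert v (nbrs E v))) e"
  then have eig: "eigenvalue (adj_mat E (insert v N)) e" unfolding N_def .
  have "finite (insert v N)" using fin by simp
  from adj_mat_eigenvalueE[OF this eig] obtain g where nz: "\<exists>u\<in>insert v N. g u \<noteq> 0"
    and eq: "\<And>u. u \<in> insert v N \<Longrightarrow> e * g u = (\<Sum>w\<in>insert v N. if E u w then g w else 0)"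
    by blast
  define T where "T = (\<Sum>w\<in>N. g w)"
  have eq_v: "e * g v = T"
  proof -
    have "e * g v = (\<Sum>w\<in>N. if E v w then g w else 0)" using eq[of v] fin vN irrefl by simp
    also have "\<dots> = T" unfolding T_def using N_iff by (intro sum.cong) auto
    finally show ?thesis .
  qed
  have eq_N: "e * g u = g v + (\<Sum>w\<in>N. if E u w then g w else 0)" if u: "u \<in> N" for u
  proof -
    have "E u v" using sym N_iff u by blast
    then show ?thesis using eq[of u] u fin vN by simp
  qed
  have count: "(\<Sum>u\<in>N. if E u w then g w else 0) = real a * g w" if w: "w \<in> N" for w
  proof -
    have "{u\<in>N. E u w} = {u\<in>N. E w u}" using sym by blast
    then show ?thesis using deg[OF w] fin by (simp add: sum.inter_filter[symmetric])
  qed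
  have swap: "(\<Sum>u\<in>N. \<Sum>w\<in>N. if E u w then g w else 0) = real a * T"
    unfolding T_def sum_distrib_left using count by (subst sum.swap) simp
  \<comment> \<open>summing the eigen-equations over the neighbourhood forces g v = 0\<close>
  have "e * T = (\<Sum>u\<in>N. g v + (\<Sum>w\<in>N. if E u w then g w else 0))"
    unfolding T_def sum_distrib_left using eq_N by (intro sum.cong) auto
  also have "\<dots> = real (card N) * g v + real a * T"
    by (simp add: sum.distrib swap)
  finally have "(e * e - real a * e - real (card N)) * g v = 0"
    using eq_v by (simp add: algebra_simps)
  then have gv: "g v = 0" using quad N_def by simp
  have "g u = 0" if u: "u \<in> N" for u
    by (rule eigenfunction_eq_0_if_gt_max_degree[where E = E, OF fin _ ea _ u])
      (use deg eq_N gv in auto)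
  with gv nz show False by auto
qed

lemma eigenvalue_cases_of_square_identity:
  fixes A :: "'a::field mat" and d k p q cc :: 'a
  assumes A: "A \<in> carrier_mat n n"
    and col_sum: "\<And>j. j < n \<Longrightarrow> (\<Sum>i = 0..<n. A $$ (i,j)) = k"
    and square: "\<And>i j. i < n \<Longrightarrow> j < n \<Longrightarrow> (\<Sum>l = 0..<n. A $$ (i,l) * A $$ (l,j))
                   = p * A $$ (i,j) + (if i = j then q else 0) + cc"
    and "eigenvalue A d"
  shows "d = k \<or> d * d - p * d - q = 0"
proof -
  obtain v where v_nz: "\<exists>i<n. v $ i \<noteq> 0"
    and eig: "\<And>i. i < n \<Longrightarrow> (\<Sum>j = 0..<n. A $$ (i,j) * v $ j) = d * v $ i"
    using eigenvalue_entrywiseE[OF A \<open>eigenvalue A d\<close>] by blast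
  define S where "S = (\<Sum>j = 0..<n. v $ j)"
  have "d * S = (\<Sum>i = 0..<n. \<Sum>j = 0..<n. A $$ (i,j) * v $ j)"
    unfolding S_def sum_distrib_left using eig by simp
  also have "\<dots> = (\<Sum>j = 0..<n. (\<Sum>i = 0..<n. A $$ (i,j)) * v $ j)"
    by (subst sum.swap) (simp add: sum_distrib_right)
  also have "\<dots> = k * S" unfolding S_def sum_distrib_left using col_sum by simp
  finally have dS: "d * S = k * S" .
  have square_v: "d * d * v $ i = p * (d * v $ i) + q * v $ i + cc * S" if i: "i < n" for i
  proof -
    have "d * d * v $ i = d * (\<Sum>j = 0..<n. A $$ (i,j) * v $ j)" using eig[OF i] by simp
    also have "\<dots> = (\<Sum>j = 0..<n. A $$ (i,j) * (d * v $ j))"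
      by (simp add: sum_distrib_left algebra_simps)
    also have "\<dots> = (\<Sum>j = 0..<n. A $$ (i,j) * (\<Sum>l = 0..<n. A $$ (j,l) * v $ l))"
      using eig by simp
    also have "\<dots> = (\<Sum>l = 0..<n. (\<Sum>j = 0..<n. A $$ (i,j) * A $$ (j,l)) * v $ l)"
      by (simp add: sum_distrib_left sum_distrib_right algebra_simps) (rule sum.swap)
    also have "\<dots> = (\<Sum>l = 0..<n. (p * A $$ (i,l) + (if i = l then q else 0) + cc) * v $ l)"
      using square[OF i] by simp
    also have "\<dots> = p * (\<Sum>l = 0..<n. A $$ (i,l) * v $ l)
        + (\<Sum>l = 0..<n. (if i = l then q else 0) * v $ l) + cc * S"
      unfolding S_def by (simp add: algebra_simps sum.distrib sum_distrib_left)
    also have "(\<Sum>l = 0..<n. (if i = l then q else 0) * v $ l) = q * v $ i"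
      using i by (simp add: if_distrib[of "\<lambda>x. x * _"] cong: if_cong)
    finally show ?thesis using eig[OF i] by simp
  qed
  show ?thesis
  proof (cases "S = 0")
    case False
    then show ?thesis using dS by simp
  next
    case True
    obtain i where i: "i < n" "v $ i \<noteq> 0" using v_nz by blast
    from square_v[OF i(1)] True have "(d * d - p * d - q) * v $ i = 0" by (simp add: algebra_simps)
    with i(2) show ?thesis by simp
  qed
qed

lemma sum_entries_of_square_identity:
  fixes A :: "'a::field mat" and k p q cc :: 'a
  assumes row_sum: "\<And>i. i < n \<Longrightarrow> (\<Sum>j = 0..<n. A $$ (i,j)) = k"
    and col_sum: "\<And>j. j < n \<Longrightarrow> (\<Sum>i = 0..<n. A $$ (i,j)) = k"
    and square: "\<And>i j. i < n \<Longrightarrow> j < n \<Longrightarrow> (\<Sum>l = 0..<n. A $$ (i,l) * A $$ (l,j))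
                   = p * A $$ (i,j) + (if i = j then q else 0) + cc"
  shows "of_nat n * (k * k) = of_nat n * (p * k + q + of_nat n * cc)"
proof -
  let ?S = "\<Sum>i = 0..<n. \<Sum>j = 0..<n. \<Sum>l = 0..<n. A $$ (i,l) * A $$ (l,j)"
  have "?S = (\<Sum>i = 0..<n. \<Sum>l = 0..<n. \<Sum>j = 0..<n. A $$ (i,l) * A $$ (l,j))"
    by (intro sum.cong refl sum.swap)
  also have "\<dots> = (\<Sum>l = 0..<n. (\<Sum>i = 0..<n. A $$ (i,l)) * (\<Sum>j = 0..<n. A $$ (l,j)))"
    by (subst sum.swap) (simp add: sum_product)
  also have "\<dots> = of_nat n * (k * k)" using row_sum col_sum by simp
  finally have S_kk: "?S = of_nat n * (k * k)" .
  have "?S = (\<Sum>i = 0..<n. p * k + q + of_nat n * cc)"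
    using square row_sum by (simp add: sum.distrib flip: sum_distrib_left)
  then show ?thesis unfolding S_kk by simp
qed

definition mat_trace :: "'a::comm_ring_1 mat \<Rightarrow> 'a" where
  "mat_trace M = (\<Sum>i = 0..<dim_row M. M $$ (i,i))"

lemma mat_trace_mult_comm:
  assumes M: "M \<in> carrier_mat n m" and N: "N \<in> carrier_mat m n"
  shows "mat_trace (M * N) = mat_trace (N * M)"
proof -
  have "mat_trace (M * N) = (\<Sum>i = 0..<n. \<Sum>l = 0..<m. M $$ (i,l) * N $$ (l,i))"
    unfolding mat_trace_def using M N by (simp add: scalar_prod_def)
  also have "\<dots> = (\<Sum>l = 0..<m. \<Sum>i = 0..<n. N $$ (l,i) * M $$ (i,l))"
    by (subst sum.swap) (simp add: mult.commute)
  also have "\<dots> = mat_trace (N * M)"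
    unfolding mat_trace_def using M N by (simp add: scalar_prod_def)
  finally show ?thesis .
qed

lemma mat_trace_conjugate:
  assumes P: "P \<in> carrier_mat n n" and Q: "Q \<in> carrier_mat n n" and X: "X \<in> carrier_mat n n"
    and QP: "Q * P = 1\<^sub>m n"
  shows "mat_trace (P * X * Q) = mat_trace X"
proof -
  have "mat_trace (P * X * Q) = mat_trace (Q * (P * X))" using P X Q by (intro mat_trace_mult_comm) auto
  also have "Q * (P * X) = (Q * P) * X" using P X Q by (simp add: assoc_mult_mat)
  finally show ?thesis using QP X by simp
qed

lemma upper_triangular_square_diag:
  assumes J: "J \<in> carrier_mat n n" and ut: "upper_triangular J" and i: "i < n"
  shows "(J * J) $$ (i,i) = J $$ (i,i) * J $$ (i,i)"
proof -
  have "J $$ (i,l) * J $$ (l,i) = 0" if "l < n" "l \<noteq> i" for l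
    using that upper_triangularD[OF ut] J i by (cases "l < i") auto
  then have "(\<Sum>l = 0..<n. J $$ (i,l) * J $$ (l,i)) = J $$ (i,i) * J $$ (i,i)"
    using i by (subst sum.remove[of _ i]) auto
  then show ?thesis using J i by (simp add: scalar_prod_def)
qed

lemma complex_mat_triangular_spectrum:
  fixes A :: "complex mat"
  assumes A: "A \<in> carrier_mat n n"
  obtains D where "char_poly A = (\<Prod>i = 0..<n. [:- D i, 1:])"
    "mat_trace A = (\<Sum>i = 0..<n. D i)" "mat_trace (A * A) = (\<Sum>i = 0..<n. D i * D i)"
proof -
  obtain as where "char_poly A = (\<Prod>a\<leftarrow>as. [:- a, 1:])" using char_poly_factorized[OF A] by blast
  from jordan_nf_exists[OF A this] obtain n_as where "jordan_nf A n_as" by blast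
  then obtain P Q where w: "similar_mat_wit A (jordan_matrix n_as) P Q"
    unfolding jordan_nf_def similar_mat_def by blast
  define J where "J = jordan_matrix n_as"
  have J: "J \<in> carrier_mat n n" using w A unfolding J_def similar_mat_wit_def Let_def by auto
  have ut: "upper_triangular J"
    unfolding J_def by (rule upper_triangularI, rule jordan_matrix_upper_triangular) auto
  define D where "D i = J $$ (i,i)" for i
  have "char_poly A = char_poly J"
    using w char_poly_similar unfolding similar_mat_def J_def by blast
  also have "\<dots> = (\<Prod>a\<leftarrow>diag_mat J. [:- a, 1:])" by (rule char_poly_upper_triangular[OF J ut])
  also have "\<dots> = (\<Prod>i = 0..<n. [:- D i, 1:])"
    unfolding diag_mat_def D_def using J
    by (simp add: prod.distinct_set_conv_list[symmetric, of "[0..<n]"] comp_def)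
  finally have "char_poly A = (\<Prod>i = 0..<n. [:- D i, 1:])" .
  moreover have "mat_trace A = (\<Sum>i = 0..<n. D i)" and "mat_trace (A * A) = (\<Sum>i = 0..<n. D i * D i)"
  proof -
    have P: "P \<in> carrier_mat n n" and Q: "Q \<in> carrier_mat n n" and QP: "Q * P = 1\<^sub>m n"
      and AJ: "A = P * J * Q"
      using w A unfolding J_def similar_mat_wit_def Let_def by auto
    have AA: "A * A = P * (J * J) * Q"
      using similar_mat_wit_pow_id[OF w[folded J_def], of 2] A J by (simp add: numeral_2_eq_2)
    have "mat_trace A = mat_trace J" unfolding AJ by (rule mat_trace_conjugate[OF P Q J QP])
    then show "mat_trace A = (\<Sum>i = 0..<n. D i)" using J by (simp add: mat_trace_def D_def)
    have "mat_trace (A * A) = mat_trace (J * J)"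
      unfolding AA by (rule mat_trace_conjugate[OF P Q _ QP]) (use J in simp)
    then show "mat_trace (A * A) = (\<Sum>i = 0..<n. D i * D i)"
      using J upper_triangular_square_diag[OF J ut] by (simp add: mat_trace_def D_def)
  qed
  ultimately show ?thesis using that by blast
qed

lemma sum_prod_card_three_values:
  fixes D :: "nat \<Rightarrow> 'b" and I :: "nat set"
  assumes fin: "finite I" and D: "\<And>i. i \<in> I \<Longrightarrow> D i = x \<or> D i = y \<or> D i = z"
    and xy: "x \<noteq> y" and xz: "x \<noteq> z" and yz: "y \<noteq> z"
  shows "(\<Sum>i\<in>I. h (D i)) = of_nat (card {i\<in>I. D i = x}) * h x + of_nat (card {i\<in>I. D i = y}) * h y
           + of_nat (card {i\<in>I. D i = z}) * (h z :: 'c :: comm_semiring_1)"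
    "(\<Prod>i\<in>I. p (D i)) = p x ^ card {i\<in>I. D i = x} * p y ^ card {i\<in>I. D i = y}
           * (p z :: 'd :: comm_monoid_mult) ^ card {i\<in>I. D i = z}"
    "card {i\<in>I. D i = x} + card {i\<in>I. D i = y} + card {i\<in>I. D i = z} = card I"
proof -
  let ?I0 = "{i\<in>I. D i = x}" and ?I1 = "{i\<in>I. D i = y}" and ?I2 = "{i\<in>I. D i = z}"
  have U: "I = ?I0 \<union> (?I1 \<union> ?I2)" using D by blast
  have d1: "?I0 \<inter> (?I1 \<union> ?I2) = {}" using xy xz by blast
  have d2: "?I1 \<inter> ?I2 = {}" using yz by blast
  have f0: "finite ?I0" "finite ?I1" "finite ?I2" using fin by auto
  have "(\<Sum>i\<in>I. h (D i)) = (\<Sum>i\<in>?I0. h (D i)) + ((\<Sum>i\<in>?I1. h (D i)) + (\<Sum>i\<in>?I2. h (D i)))"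
    by (subst U, subst sum.union_disjoint, use f0 d1 in auto, subst sum.union_disjoint) (use f0 d2 in auto)
  then show "(\<Sum>i\<in>I. h (D i)) = of_nat (card ?I0) * h x + of_nat (card ?I1) * h y + of_nat (card ?I2) * h z"
    by (simp add: add.assoc)
  have "(\<Prod>i\<in>I. p (D i)) = (\<Prod>i\<in>?I0. p (D i)) * ((\<Prod>i\<in>?I1. p (D i)) * (\<Prod>i\<in>?I2. p (D i)))"
    by (subst U, subst prod.union_disjoint, use f0 d1 in auto, subst prod.union_disjoint) (use f0 d2 in auto)
  then show "(\<Prod>i\<in>I. p (D i)) = p x ^ card ?I0 * p y ^ card ?I1 * p z ^ card ?I2"
    by (simp add: mult.assoc)
  have "card I = card ?I0 + (card ?I1 + card ?I2)"
    by (subst U, subst card_Un_disjoint, use f0 d1 in auto, subst card_Un_disjoint) (use f0 d2 in auto)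
  then show "card ?I0 + card ?I1 + card ?I2 = card I" by simp
qed

lemma char_poly_three_eigenvalues:
  fixes C :: "complex mat"
  assumes C: "C \<in> carrier_mat n n"
    and eig: "\<And>d. eigenvalue C d \<Longrightarrow> d = x \<or> d = y \<or> d = z"
    and xy: "x \<noteq> y" and xz: "x \<noteq> z" and yz: "y \<noteq> z"
  obtains m0 f g where "char_poly C = [:- x, 1:] ^ m0 * [:- y, 1:] ^ f * [:- z, 1:] ^ g"
    "m0 + f + g = n"
    "mat_trace C = of_nat m0 * x + of_nat f * y + of_nat g * z"
    "mat_trace (C * C) = of_nat m0 * (x * x) + of_nat f * (y * y) + of_nat g * (z * z)"
proof -
  obtain D where cp: "char_poly C = (\<Prod>i = 0..<n. [:- D i, 1:])"
    and tr: "mat_trace C = (\<Sum>i = 0..<n. D i)" and tr2: "mat_trace (C * C) = (\<Sum>i = 0..<n. D i * D i)"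
    using complex_mat_triangular_spectrum[OF C] by blast
  have "D i = x \<or> D i = y \<or> D i = z" if i: "i \<in> {0..<n}" for i
  proof -
    have "poly (char_poly C) (D i) = 0" unfolding cp poly_prod using i
      by (intro prod_zero[of "{0..<n}"]) auto
    then show ?thesis using eig eigenvalue_root_char_poly[OF C] by blast
  qed
  note count = sum_prod_card_three_values[of "{0..<n}" D, OF finite_atLeastLessThan this xy xz yz]
  show ?thesis
    by (rule that) (use cp tr tr2 count(2)[of "\<lambda>d. [:- d, 1:]"] count(1)[of "\<lambda>d. d"] count(1)[of "\<lambda>d. d * d"] count(3) in simp_all)
qed

lemma order_three_linear_factors:
  fixes x y z :: "'a :: idom"
  assumes "y \<noteq> x" "y \<noteq> z"
  shows "order y ([:- x, 1:] ^ m0 * [:- y, 1:] ^ f * [:- z, 1:] ^ g) = f"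
  using assms by (simp add: order_mult order_linear_power)

lemma strongly_regularD:
  assumes "strongly_regular V E n k a c"
  shows "finite V" "card V = n"
    "\<And>u v. E u v \<Longrightarrow> u \<in> V" "\<And>u v. E u v \<Longrightarrow> v \<in> V" "\<And>u v. E u v \<Longrightarrow> E v u" "\<And>u. \<not> E u u"
    "\<And>v. v \<in> V \<Longrightarrow> card (nbrs E v) = k"
    "\<And>u v. u \<in> V \<Longrightarrow> v \<in> V \<Longrightarrow> E u v \<Longrightarrow> card (nbrs E u \<inter> nbrs E v) = a"
    "\<And>u v. u \<in> V \<Longrightarrow> v \<in> V \<Longrightarrow> u \<noteq> v \<Longrightarrow> \<not> E u v \<Longrightarrow> card (nbrs E u \<inter> nbrs E v) = c"
  using assms unfolding strongly_regular_def simple_graph_def by blast+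

lemma strongly_regular_simple_graph: "strongly_regular V E n k a c \<Longrightarrow> simple_graph V E"
  unfolding strongly_regular_def by blast

lemma adj_entries_sums_eq_card_nbrs:
  fixes M :: "'b::comm_semiring_1 mat"
  assumes G: "simple_graph V E" and xs: "distinct xs" "set xs = V" "length xs = n"
    and M: "\<And>i j. i < n \<Longrightarrow> j < n \<Longrightarrow> M $$ (i,j) = (if E (xs!i) (xs!j) then 1 else 0)"
  shows "\<And>i. i < n \<Longrightarrow> (\<Sum>j = 0..<n. M $$ (i,j)) = of_nat (card (nbrs E (xs!i)))"
    "\<And>i j. i < n \<Longrightarrow> j < n \<Longrightarrow> (\<Sum>l = 0..<n. M $$ (i,l) * M $$ (l,j))
       = of_nat (card (nbrs E (xs!i) \<inter> nbrs E (xs!j)))"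
proof -
  have in_V: "\<And>u w. E u w \<Longrightarrow> w \<in> V" and sym: "\<And>u w. E u w \<Longrightarrow> E w u"
    using G unfolding simple_graph_def by auto
  have reindex: "(\<Sum>j = 0..<n. h (xs ! j)) = (\<Sum>u\<in>V. h u)" for h :: "'a \<Rightarrow> 'b"
    using sum_nth_distinct[OF xs(1)] xs(2,3) by simp
  have count: "(\<Sum>u\<in>V. if P u then (1::'b) else 0) = of_nat (card {u\<in>V. P u})" for P
    using G unfolding simple_graph_def by (simp add: sum.inter_filter[symmetric])
  show "(\<Sum>j = 0..<n. M $$ (i,j)) = of_nat (card (nbrs E (xs!i)))" if i: "i < n" for i
  proof -
    have "(\<Sum>j = 0..<n. M $$ (i,j)) = (\<Sum>j = 0..<n. (\<lambda>u. if E (xs!i) u then 1 else 0) (xs!j))"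
      using M i by (intro sum.cong) auto
    also have "\<dots> = (\<Sum>u\<in>V. if E (xs!i) u then 1 else 0)" by (rule reindex)
    also have "\<dots> = of_nat (card {u\<in>V. E (xs!i) u})" by (rule count)
    also have "{u\<in>V. E (xs!i) u} = nbrs E (xs!i)" using in_V unfolding nbrs_def by blast
    finally show ?thesis .
  qed
  show "(\<Sum>l = 0..<n. M $$ (i,l) * M $$ (l,j)) = of_nat (card (nbrs E (xs!i) \<inter> nbrs E (xs!j)))"
    if i: "i < n" and j: "j < n" for i j
  proof -
    have "(\<Sum>l = 0..<n. M $$ (i,l) * M $$ (l,j))
        = (\<Sum>l = 0..<n. (\<lambda>u. if E (xs!i) u \<and> E u (xs!j) then 1 else 0) (xs!l))"
      using M i j by (intro sum.cong) auto
    also have "\<dots> = (\<Sum>u\<in>V. if E (xs!i) u \<and> E u (xs!j) then 1 else 0)" by (rule reindex)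
    also have "\<dots> = of_nat (card {u\<in>V. E (xs!i) u \<and> E u (xs!j)})" by (rule count)
    also have "{u\<in>V. E (xs!i) u \<and> E u (xs!j)} = nbrs E (xs!i) \<inter> nbrs E (xs!j)"
      using in_V sym unfolding nbrs_def by blast
    finally show ?thesis .
  qed
qed

lemma strongly_regular_adj_entries:
  fixes M :: "'b::comm_ring_1 mat"
  assumes srg: "strongly_regular V E n k a c" and xs: "distinct xs" "set xs = V"
    and M: "\<And>i j. i < n \<Longrightarrow> j < n \<Longrightarrow> M $$ (i,j) = (if E (xs!i) (xs!j) then 1 else 0)"
  shows "\<And>i. i < n \<Longrightarrow> M $$ (i,i) = 0"
    "\<And>i. i < n \<Longrightarrow> (\<Sum>j = 0..<n. M $$ (i,j)) = of_nat k"
    "\<And>j. j < n \<Longrightarrow> (\<Sum>i = 0..<n. M $$ (i,j)) = of_nat k"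
    "\<And>i j. i < n \<Longrightarrow> j < n \<Longrightarrow> (\<Sum>l = 0..<n. M $$ (i,l) * M $$ (l,j))
       = (of_nat a - of_nat c) * M $$ (i,j) + (if i = j then of_nat k - of_nat c else 0) + of_nat c"
proof -
  note F = strongly_regularD[OF srg]
  note G = strongly_regular_simple_graph[OF srg]
  have len: "length xs = n" using xs F(2) distinct_card by fastforce
  have row_card: "(\<Sum>j = 0..<n. M $$ (i,j)) = of_nat (card (nbrs E (xs!i)))" if "i < n" for i
    using M that by (rule adj_entries_sums_eq_card_nbrs(1)[OF G xs len])
  have square_card: "(\<Sum>l = 0..<n. M $$ (i,l) * M $$ (l,j))
      = of_nat (card (nbrs E (xs!i) \<inter> nbrs E (xs!j)))" if "i < n" "j < n" for i j
    using M that by (rule adj_entries_sums_eq_card_nbrs(2)[OF G xs len])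
  have xsV: "xs ! i \<in> V" if "i < n" for i using xs len that by auto
  show diag: "M $$ (i,i) = 0" if "i < n" for i using M that F(6) by simp
  show row: "(\<Sum>j = 0..<n. M $$ (i,j)) = of_nat k" if i: "i < n" for i
    using row_card[OF i] F(7)[OF xsV[OF i]] by simp
  show "(\<Sum>i = 0..<n. M $$ (i,j)) = of_nat k" if j: "j < n" for j
  proof -
    have "(\<Sum>i = 0..<n. M $$ (i,j)) = (\<Sum>i = 0..<n. M $$ (j,i))"
      using M j F(5) by (intro sum.cong) auto
    then show ?thesis using row[OF j] by simp
  qed
  fix i j assume i: "i < n" and j: "j < n"
  show "(\<Sum>l = 0..<n. M $$ (i,l) * M $$ (l,j))
       = (of_nat a - of_nat c) * M $$ (i,j) + (if i = j then of_nat k - of_nat c else 0) + of_nat c"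
  proof (cases "i = j")
    case True
    then show ?thesis using square_card[OF i j] F(7)[OF xsV[OF i]] diag[OF i] by simp
  next
    case False
    then have "xs!i \<noteq> xs!j" using xs(1) len i j nth_eq_iff_index_eq by metis
    then show ?thesis using square_card[OF i j] F(8,9)[OF xsV[OF i] xsV[OF j]] M i j False by auto
  qed
qed

lemma strongly_regular_adj_mat:
  assumes srg: "strongly_regular V E n k a c"
  obtains xs where "distinct xs" "set xs = V" "adj_mat E V \<in> carrier_mat n n"
    "\<And>i j. i < n \<Longrightarrow> j < n \<Longrightarrow> adj_mat E V $$ (i,j) = (if E (xs!i) (xs!j) then 1 else 0)"
proof -
  obtain xs where "distinct xs" "set xs = V"
    and "adj_mat E V = mat n n (\<lambda>(i,j). if E (xs!i) (xs!j) then 1 else 0)"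
    using adj_mat_enumeration[OF strongly_regularD(1)[OF srg]] strongly_regularD(2)[OF srg] by metis
  then show ?thesis by (intro that) simp_all
qed

lemma strongly_regular_complex_eigenvalue:
  fixes r s :: real
  assumes srg: "strongly_regular V E n k a c"
    and quad: "r * r - (real a - real c) * r - (real k - real c) = 0" and s: "s = real a - real c - r"
    and "eigenvalue (map_mat complex_of_real (adj_mat E V)) d"
  shows "d = of_nat k \<or> d = of_real r \<or> d = of_real s"
proof -
  obtain xs where xs: "distinct xs" "set xs = V" and A: "adj_mat E V \<in> carrier_mat n n"
    and A_ij: "\<And>i j. i < n \<Longrightarrow> j < n \<Longrightarrow> adj_mat E V $$ (i,j) = (if E (xs!i) (xs!j) then 1 else 0)"
    using strongly_regular_adj_mat[OF srg] by blast
  define C where "C = map_mat complex_of_real (adj_mat E V)"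
  have C: "C \<in> carrier_mat n n" unfolding C_def using A by simp
  have "C $$ (i,j) = (if E (xs!i) (xs!j) then 1 else 0)" if "i < n" "j < n" for i j
    unfolding C_def using that A A_ij by simp
  note CE = strongly_regular_adj_entries[OF srg xs this]
  have sum_rs: "complex_of_real r + complex_of_real s = of_nat a - of_nat c" using s by simp
  have "r * s = - (real k - real c)" using quad unfolding s by (simp add: algebra_simps)
  then have prod_rs: "complex_of_real r * complex_of_real s = - (of_nat k - of_nat c)"
    by (metis of_real_mult of_real_minus of_real_diff of_real_of_nat_eq)
  have factor: "d * d - (of_nat a - of_nat c) * d - (of_nat k - of_nat c) = (d - of_real r) * (d - of_real s)"
    unfolding sum_rs[symmetric] by (simp add: algebra_simps prod_rs)
  have "eigenvalue C d" using assms(4) unfolding C_def .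
  from eigenvalue_cases_of_square_identity[OF C CE(3,4) this] show ?thesis unfolding factor by simp
qed

lemma strongly_regular_char_poly:
  fixes r s :: real
  assumes srg: "strongly_regular V E n k a c"
    and quad: "r * r - (real a - real c) * r - (real k - real c) = 0" and s: "s = real a - real c - r"
    and kr: "real k \<noteq> r" and ks: "real k \<noteq> s" and rs: "r \<noteq> s"
  obtains m0 f g where "char_poly (adj_mat E V) = [:- real k, 1:] ^ m0 * [:- r, 1:] ^ f * [:- s, 1:] ^ g"
    "m0 + f + g = n" "real m0 * real k + real f * r + real g * s = 0"
    "real m0 * (real k * real k) + real f * (r * r) + real g * (s * s) = real n * real k"
proof -
  obtain xs where xs: "distinct xs" "set xs = V" and A: "adj_mat E V \<in> carrier_mat n n"
    and A_ij: "\<And>i j. i < n \<Longrightarrow> j < n \<Longrightarrow> adj_mat E V $$ (i,j) = (if E (xs!i) (xs!j) then 1 else 0)"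
    using strongly_regular_adj_mat[OF srg] by blast
  define C where "C = map_mat complex_of_real (adj_mat E V)"
  have C: "C \<in> carrier_mat n n" unfolding C_def using A by simp
  have "C $$ (i,j) = (if E (xs!i) (xs!j) then 1 else 0)" if "i < n" "j < n" for i j
    unfolding C_def using that A A_ij by simp
  note CE = strongly_regular_adj_entries[OF srg xs this]
  have "d = of_nat k \<or> d = of_real r \<or> d = of_real s" if "eigenvalue C d" for d
    using strongly_regular_complex_eigenvalue[OF srg quad s] that unfolding C_def by blast
  moreover have "of_nat k \<noteq> complex_of_real r" "of_nat k \<noteq> complex_of_real s"
    "complex_of_real r \<noteq> complex_of_real s"
    using kr ks rs by (metis of_real_eq_iff of_real_of_nat_eq)+
  ultimately obtain m0 f g where
    cp: "char_poly C = [:- of_nat k, 1:] ^ m0 * [:- of_real r, 1:] ^ f * [:- of_real s, 1:] ^ g"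
    and n: "m0 + f + g = n"
    and tr: "mat_trace C = of_nat m0 * of_nat k + of_nat f * of_real r + of_nat g * of_real s"
    and tr2: "mat_trace (C * C) = of_nat m0 * (of_nat k * of_nat k) + of_nat f * (of_real r * of_real r)
                + of_nat g * (of_real s * of_real s)"
    by (rule char_poly_three_eigenvalues[OF C])
  have "mat_trace C = 0" unfolding mat_trace_def using C CE(1) by simp
  with tr have "complex_of_real (real m0 * real k + real f * r + real g * s) = 0" by simp
  moreover have "mat_trace (C * C) = of_nat n * of_nat k"
    unfolding mat_trace_def using C CE(1,4) by (simp add: scalar_prod_def)
  with tr2 have "complex_of_real (real m0 * (real k * real k) + real f * (r * r) + real g * (s * s))
      = complex_of_real (real n * real k)" by simp
  moreover have "char_poly (adj_mat E V) = [:- real k, 1:] ^ m0 * [:- r, 1:] ^ f * [:- s, 1:] ^ g"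
  proof -
    interpret R: map_poly_inj_idom_hom "of_real :: real \<Rightarrow> complex" ..
    have "map_poly complex_of_real (char_poly (adj_mat E V)) = char_poly C"
      unfolding C_def by (rule of_real_hom.char_poly_hom[symmetric, OF A])
    also have "\<dots> = map_poly complex_of_real ([:- real k, 1:] ^ m0 * [:- r, 1:] ^ f * [:- s, 1:] ^ g)"
      unfolding cp by (simp add: R.hom_mult R.hom_power of_real_hom.map_poly_pCons_hom)
    finally show ?thesis by simp
  qed
  ultimately show ?thesis using that n by (simp only: of_real_eq_iff of_real_eq_0_iff)
qed

lemma strongly_regular_parameter_identity:
  assumes srg: "strongly_regular V E n k a c" and "V \<noteq> {}"
  shows "real k * real k = (real a - real c) * real k + (real k - real c) + real c * real n"
proof -
  obtain xs where xs: "distinct xs" "set xs = V" and "adj_mat E V \<in> carrier_mat n n"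
    and A_ij: "\<And>i j. i < n \<Longrightarrow> j < n \<Longrightarrow> adj_mat E V $$ (i,j) = (if E (xs!i) (xs!j) then 1 else 0)"
    using strongly_regular_adj_mat[OF srg] by blast
  note AE = strongly_regular_adj_entries[OF srg xs A_ij]
  have "real n > 0" using assms strongly_regularD(1,2)[OF srg] card_gt_0_iff by fastforce
  with sum_entries_of_square_identity[OF AE(2-4)]
  have "real k * real k = (real a - real c) * real k + (real k - real c) + real n * real c" by simp
  then show ?thesis by (simp only: mult.commute[of "real n"])
qed

lemma quadratic_root_eq_0:
  fixes r p q :: real
  assumes "p\<^sup>2 + 4 * q \<ge> 0" and "r = (p + sqrt (p\<^sup>2 + 4 * q)) / 2"
  shows "r * r - p * r - q = 0"
proof -
  have "sqrt (p\<^sup>2 + 4 * q) = 2 * r - p" using assms(2) by simp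
  then have "(2 * r - p)\<^sup>2 = p\<^sup>2 + 4 * q" using assms(1) by (metis real_sqrt_pow2)
  then show ?thesis by (simp add: power2_eq_square algebra_simps)
qed

lemma srg_root_facts:
  fixes r s a c k :: real
  assumes quad: "r * r - (a - c) * r - (k - c) = 0" and c_r: "c = r * (r + 1)"
    and s: "s = a - c - r" and a0: "0 \<le> a" and ar: "a < r"
  shows "k = r * r * r + 3 * r * r + r - a * r" "k \<noteq> r" "k \<noteq> s" "r \<noteq> s"
    "r * r - a * r - k \<noteq> 0" "c > 0"
proof -
  show k: "k = r * r * r + 3 * r * r + r - a * r" using quad c_r by (simp add: algebra_simps)
  have r0: "r > 0" using ar a0 by simp
  then show c0: "c > 0" using c_r by simp
  have "r * r + 3 * r - a > 0" using r0 ar by (smt (verit) mult_pos_pos)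
  moreover have "k - r = r * (r * r + 3 * r - a)" using k by (simp add: algebra_simps)
  ultimately have kr: "k - r > 0" using r0 by simp
  then show "k \<noteq> r" by simp
  show "r \<noteq> s" using s ar r0 c0 by linarith
  show "k \<noteq> s" using s ar c0 kr r0 by linarith
  have "r * r - a * r - k = - c * (r + 1)" using k c_r by (simp add: algebra_simps)
  then show "r * r - a * r - k \<noteq> 0" using c0 r0 by simp
qed

lemma srg_multiplicity_from_traces:
  fixes r s a c k n mk mr ms :: real
  assumes quad: "r * r - (a - c) * r - (k - c) = 0" and c_r: "c = r * (r + 1)"
    and s: "s = a - c - r" and a0: "0 \<le> a" and ar: "a < r"
    and h1: "mk + mr + ms = n" and h2: "mk * k + mr * r + ms * s = 0"
    and h3: "mk * (k * k) + mr * (r * r) + ms * (s * s) = n * k"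
    and h4: "k * k = (a - c) * k + (k - c) + c * n"
  shows "mr = n - k - 1"
proof -
  note R = srg_root_facts[OF quad c_r s a0 ar]
  \<comment> \<open>eliminate \<open>mk\<close> and \<open>ms\<close>: multiply out \<open>(x - k) (x - s)\<close> at each eigenvalue\<close>
  have "mr * (r - k) * (r - s) = (mk * (k * k) + mr * (r * r) + ms * (s * s)) - (k + s) * (mk * k + mr * r + ms * s)
      + k * s * (mk + mr + ms)"
    by (simp add: algebra_simps)
  then have mr_eq: "mr * (r - k) * (r - s) = n * k * (1 + s)" unfolding h1 h2 h3 by (simp add: algebra_simps)
  have cn: "c * n = k * k - (a - c) * k - (k - c)" using h4 by simp
  have "c * ((n - k - 1) * (r - k) * (r - s) - n * k * (1 + s))
      = (c * n - c * (k + 1)) * (r - k) * (r - s) - (c * n) * k * (1 + s)"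
    by (simp add: algebra_simps)
  also have "\<dots> = 0" unfolding cn unfolding s R(1) c_r by (simp add: algebra_simps)
  finally have "(n - k - 1) * (r - k) * (r - s) = n * k * (1 + s)" using R(6) by simp
  with mr_eq have "mr * ((r - k) * (r - s)) = (n - k - 1) * ((r - k) * (r - s))"
    by (simp add: algebra_simps)
  moreover have "(r - k) * (r - s) \<noteq> 0" using R(2,4) by simp
  ultimately show ?thesis by simp
qed

lemma strongly_regular_eig_mult:
  fixes r :: real
  assumes srg: "strongly_regular V E n k a c" and "V \<noteq> {}"
    and quad: "r * r - (real a - real c) * r - (real k - real c) = 0"
    and c_r: "real c = r * (r + 1)" and ar: "real a < r"
  shows "eig_mult (adj_mat E V) r = n - k - 1"
proof -
  define s where "s = real a - real c - r"
  note R = srg_root_facts[OF quad c_r s_def of_nat_0_le_iff ar]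
  obtain m0 f g where cp: "char_poly (adj_mat E V) = [:- real k, 1:] ^ m0 * [:- r, 1:] ^ f * [:- s, 1:] ^ g"
    and mults: "m0 + f + g = n" "real m0 * real k + real f * r + real g * s = 0"
    "real m0 * (real k * real k) + real f * (r * r) + real g * (s * s) = real n * real k"
    using strongly_regular_char_poly[OF srg quad s_def] R(2-4) by auto
  have "real f = real n - real k - 1"
    by (rule srg_multiplicity_from_traces[OF quad c_r s_def of_nat_0_le_iff ar, where mk = "real m0" and ms = "real g"])
      (use mults strongly_regular_parameter_identity[OF assms(1,2)] in simp_all)
  then have "f = n - k - 1" by linarith
  then show ?thesis unfolding eig_mult_def cp using R(2,4) by (simp add: order_three_linear_factors)
qed

theorem theorem6p1:
  fixes V :: "'v set" and E :: "'v \<Rightarrow> 'v \<Rightarrow> bool"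
    and n k a c :: nat and e :: int
  assumes srg: "strongly_regular V E n k a c"
    and conn: "graph_connected V E"
    and nonbip: "\<not> bipartite V E"
    and k3: "k \<ge> 3" and kc: "k > c" and c1: "c \<ge> 1"
    and e_root: "real_of_int e = ((real a - real c)
                   + sqrt ((real a - real c)\<^sup>2 + 4 * (real k - real c))) / 2"
    and e_eig: "eigenvalue (adj_mat E V) (real_of_int e)"
    and c_eq: "int c = e * (e + 1)"
    and e_gt: "e > int a"
  shows "\<forall>v\<in>V. star_complement V E (real_of_int e) (insert v (nbrs E v))"
proof
  fix v assume v: "v \<in> V"
  define r where "r = real_of_int e"
  have c_r: "real c = r * (r + 1)" unfolding r_def using arg_cong[OF c_eq, of real_of_int] by simp
  have ar: "real a < r" unfolding r_def using e_gt by linarith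
  have quad: "r * r - (real a - real c) * r - (real k - real c) = 0"
    by (rule quadratic_root_eq_0) (use e_root kc in \<open>simp_all add: r_def\<close>)
  note R = srg_root_facts[OF quad c_r refl of_nat_0_le_iff ar]
  note F = strongly_regularD[OF srg]
  note G = strongly_regular_simple_graph[OF srg]
  have N: "nbrs E v \<subseteq> V" "v \<notin> nbrs E v" using F(4,6) unfolding nbrs_def by blast+
  have "card (nbrs E v \<inter> nbrs E w) = a" if "w \<in> nbrs E v" for w
    using F(8)[OF v] that N(1) unfolding nbrs_def by blast
  moreover have "r * r - real a * r - real (card (nbrs E v)) \<noteq> 0" using R(5) F(7)[OF v] by simp
  ultimately have "\<not> eigenvalue (adj_mat E (insert v (nbrs E v))) r"
    using closed_nbhd_not_eigenvalue[OF G v] ar by simp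
  moreover have "eig_mult (adj_mat E V) r = n - k - 1"
    using strongly_regular_eig_mult[OF srg _ quad c_r ar] v by blast
  moreover have "card (insert v (nbrs E v)) = k + 1"
    using N F(1,7) v finite_subset by fastforce
  moreover have "card (insert v (nbrs E v)) \<le> n"
    using N(1) v F(1,2) by (metis card_mono insert_subset)
  ultimately show "star_complement V E (real_of_int e) (insert v (nbrs E v))"
    unfolding star_complement_def r_def[symmetric] using N(1) v F(2) by auto
qed

end
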